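(* Let $|\psi\rangle_{AB}=\frac{1}{\sqrt2}(|00\rangle+|11\rangle)\in\mathbb C^2\otimes\mathbb C^2$ and for $0\le\epsilon\le1$ let $\rho^{(\epsilon)}_{AB}=(1-\epsilon)|\psi\rangle\langle\psi|+\epsilon I_{AB}/4$. Define $\lambda(\epsilon)=\min\{\mu(\sigma_{AB}):\ \sigma_{AB}\text{ a two-qubit density matrix with }\langle\psi|\sigma_{AB}|\psi\rangle\ge 1-3\epsilon/4\}$. Then $\mu_{\mathrm{ent}}(\rho^{(\epsilon)}_{AB})=\lambda(\epsilon)$. Moreover, $\lambda(\epsilon)=0$ for $\epsilon\ge 2/3$, and for $\epsilon<2/3$ we have $1-3\epsilon/2\le\lambda(\epsilon)\le 1-\epsilon$.
   Context: For a bipartite density matrix $\rho_{AB}$ with reduced states $\rho_A,\rho_B$, the maximal correlation is $\mu(\rho_{AB})=\max |\mathrm{tr}(\rho_{AB}\, X_A\otimes Y_B^\dagger)|$ over $X_A\in\mathbf L(\mathcal H_A)$, $Y_B\in\mathbf L(\mathcal H_B)$ with $\mathrm{tr}(\rho_A X_A)=\mathrm{tr}(\rho_B Y_B)=0$ and $\mathrm{tr}(\rho_A X_AX_A^\dagger)=\mathrm{tr}(\rho_B Y_BY_B^\dagger)=1$. The maximal entanglement is $\mu_{\mathrm{ent}}(\rho_{AB})=\inf \max_i \mu(\tau^{(i)}_{AB})$, the infimum over all decompositions $\rho_{AB}=\sum_i p_i\tau^{(i)}_{AB}$ with $p_i\ge0$ and $\tau^{(i)}_{AB}$ density matrices. 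*)

theory Defs
  imports Complex_Main
begin

text \<open>Operators on a finite-dimensional Hilbert space with orthonormal basis indexed by
  a finite type 'a are represented as matrices 'a \<Rightarrow> 'a \<Rightarrow> complex
  (entry M i j = \<langle>i|M|j\<rangle>).  A bipartite space H_A \<otimes> H_B has basis indexed by 'a \<times> 'b.\<close>

type_synonym 'a cmat = "'a \<Rightarrow> 'a \<Rightarrow> complex"

definition mtrace :: "('a::finite) cmat \<Rightarrow> complex" where
  "mtrace M = (\<Sum>i\<in>UNIV. M i i)"

definition mmult :: "('a::finite) cmat \<Rightarrow> 'a cmat \<Rightarrow> 'a cmat" where
  "mmult M N = (\<lambda>i k. \<Sum>j\<in>UNIV. M i j * N j k)"

definition madj :: "'a cmat \<Rightarrow> 'a cmat" where
  "madj M = (\<lambda>i j. cnj (M j i))"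

definition mtensor :: "'a cmat \<Rightarrow> 'b cmat \<Rightarrow> ('a \<times> 'b) cmat" where
  "mtensor X Y = (\<lambda>(a, b) (a', b'). X a a' * Y b b')"

definition ptrace_B :: "('a \<times> 'b::finite) cmat \<Rightarrow> 'a cmat" where
  "ptrace_B \<rho> = (\<lambda>a a'. \<Sum>b\<in>UNIV. \<rho> (a, b) (a', b))"

definition ptrace_A :: "('a::finite \<times> 'b) cmat \<Rightarrow> 'b cmat" where
  "ptrace_A \<rho> = (\<lambda>b b'. \<Sum>a\<in>UNIV. \<rho> (a, b) (a, b'))"

definition qform :: "('a::finite) cmat \<Rightarrow> ('a \<Rightarrow> complex) \<Rightarrow> complex" where
  "qform M v = (\<Sum>i\<in>UNIV. \<Sum>j\<in>UNIV. cnj (v i) * M i j * v j)"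

definition hermitian :: "'a cmat \<Rightarrow> bool" where
  "hermitian M \<longleftrightarrow> madj M = M"

definition psd :: "('a::finite) cmat \<Rightarrow> bool" where
  "psd M \<longleftrightarrow> (\<forall>v. Im (qform M v) = 0 \<and> 0 \<le> Re (qform M v))"

definition density :: "('a::finite) cmat \<Rightarrow> bool" where
  "density M \<longleftrightarrow> hermitian M \<and> psd M \<and> mtrace M = 1"

text \<open>The maximum is rendered as a supremum; 0 is adjoined so that
  the (degenerate) case of an empty feasible set gets value 0 (all values are \<ge> 0, so this
  does not change the value when the feasible set is nonempty).\<close>
definition maxcorr :: "('a::finite \<times> 'b::finite) cmat \<Rightarrow> real" where
  "maxcorr \<rho> = Sup ({0} \<union>
     {cmod (mtrace (mmult \<rho> (mtensor X (madj Y)))) | (X::'a cmat) (Y::'b cmat).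
        mtrace (mmult (ptrace_B \<rho>) X) = 0 \<and> mtrace (mmult (ptrace_A \<rho>) Y) = 0 \<and>
        mtrace (mmult (ptrace_B \<rho>) (mmult X (madj X))) = 1 \<and>
        mtrace (mmult (ptrace_A \<rho>) (mmult Y (madj Y))) = 1})"

definition maxent :: "('a::finite \<times> 'b::finite) cmat \<Rightarrow> real" where
  "maxent \<rho> = Inf {Max ((\<lambda>i. maxcorr (\<tau> i)) ` {..<n}) | (n::nat) (p::nat \<Rightarrow> real) (\<tau>::nat \<Rightarrow> ('a \<times> 'b) cmat).
     0 < n \<and> (\<forall>i<n. 0 \<le> p i \<and> density (\<tau> i)) \<and>
     \<rho> = (\<lambda>x y. \<Sum>i<n. complex_of_real (p i) * \<tau> i x y)}"

text \<open>Qubit: basis |0>, |1> indexed by False, True.\<close>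
definition psi :: "bool \<times> bool \<Rightarrow> complex" where
  "psi = (\<lambda>(a, b). if a = b then complex_of_real (1 / sqrt 2) else 0)"

definition rho_eps :: "real \<Rightarrow> (bool \<times> bool) cmat" where
  "rho_eps \<epsilon> = (\<lambda>x y. complex_of_real (1 - \<epsilon>) * psi x * cnj (psi y)
                     + complex_of_real (\<epsilon> / 4) * (if x = y then 1 else 0))"

definition lam :: "real \<Rightarrow> real" where
  "lam \<epsilon> = Inf {maxcorr \<sigma> | \<sigma> :: (bool \<times> bool) cmat.
                 density \<sigma> \<and> Re (qform \<sigma> psi) \<ge> 1 - 3 * \<epsilon> / 4}"

end

theory Submission
  imports Defs "HOL-Analysis.Linear_Algebra"
begin

text \<open>
  Write \<open>F(\<sigma>) = \<langle>\<psi>|\<sigma>|\<psi>\<rangle>\<close> for the fidelity with the Bell vector, so that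
  \<open>F(\<rho>\<^sub>\<epsilon>) = 1 - 3\<epsilon>/4\<close>.  Averaging \<open>(U \<otimes> conj U) \<sigma> (U \<otimes> conj U)\<^sup>\<dagger>\<close> over the twelve unitaries
  of the tetrahedral group (a unitary 2-design) turns any state \<open>\<sigma>\<close> into the isotropic state
  with the same fidelity, and \<open>\<rho>\<^sub>\<epsilon>\<close> is isotropic.  So for every \<open>\<sigma>\<close> with
  \<open>F(\<sigma>) \<ge> 1 - 3\<epsilon>/4\<close>, \<open>\<rho>\<^sub>\<epsilon>\<close> is a mixture of local-unitary images of \<open>\<sigma>\<close> and of the
  product state \<open>|01\<rangle>\<close>; local unitaries do not increase \<open>\<mu>\<close> and product states have
  \<open>\<mu> = 0\<close>, whence \<open>\<mu>\<^sub>e\<^sub>n\<^sub>t(\<rho>\<^sub>\<epsilon>) \<le> \<lambda>(\<epsilon>)\<close>.  Conversely the fidelity is affine, so every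
  decomposition of \<open>\<rho>\<^sub>\<epsilon>\<close> has a component with fidelity at least \<open>1 - 3\<epsilon>/4\<close>.

  For the bounds on \<open>\<lambda>\<close>: \<open>|00\<rangle>\<close> has fidelity \<open>1/2\<close> and \<open>\<mu> = 0\<close>; \<open>\<rho>\<^sub>\<epsilon>\<close> itself has
  \<open>\<mu>(\<rho>\<^sub>\<epsilon>) \<le> 1 - \<epsilon>\<close> because its noise part is killed by the constraint \<open>tr X = 0\<close>; and
  for every two-qubit state, \<open>X = n\<cdot>\<sigma>\<close> with a unit vector \<open>n\<close> orthogonal to the Bloch
  vectors of both marginals and \<open>Y = conj X\<close> is feasible, with
  \<open>X \<otimes> X\<^sup>T = 2|\<psi>\<rangle>\<langle>\<psi>| + vec X (vec X)\<^sup>\<dagger> - I\<close>, which gives \<open>\<mu>(\<sigma>) \<ge> 2F(\<sigma>) - 1\<close>.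
\<close>

lemma sum_UNIV_prod:
  "(\<Sum>x\<in>(UNIV :: ('a::finite \<times> 'b::finite) set). f x) = (\<Sum>a\<in>UNIV. \<Sum>b\<in>UNIV. f (a, b))"
  by (simp add: sum.cartesian_product flip: UNIV_Times_UNIV)

lemma sum_swap_2_2:
  "(\<Sum>i\<in>A. \<Sum>j\<in>B. \<Sum>k\<in>C. \<Sum>l\<in>D. f i j k l) = (\<Sum>k\<in>C. \<Sum>l\<in>D. \<Sum>i\<in>A. \<Sum>j\<in>B. f i j k l)"
  by (simp add: sum.swap[of _ B C] sum.swap[of _ A C] sum.swap[of _ B D] sum.swap[of _ A D])

lemma sum_lessThan_add: "(\<Sum>i<m + n::nat. f i) = (\<Sum>i<m. f i) + (\<Sum>i<n. f (m + i))"
  by (induction n) (simp_all add: add.assoc)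

lemma if_zero_mult: "(if P then x else 0) * y = (if P then x * y else (0::'a::mult_zero))"
  by simp
lemma mult_if_zero: "y * (if P then x else 0) = (if P then y * x else (0::'a::mult_zero))"
  by simp
lemma if_zero_divide: "(if P then x else 0) / y = (if P then x / y else (0::'a::field))"
  by simp
lemma sum_if_zero: "(\<Sum>x\<in>A. if P then f x else 0) = (if P then \<Sum>x\<in>A. f x else 0)"
  by simp
lemma if_conj_zero: "(if P \<and> Q then x else 0) = (if P then if Q then x else 0 else 0)"
  by simp

lemmas if_zero_simps = if_zero_mult mult_if_zero if_zero_divide sum_if_zero if_conj_zero

definition mident :: "'a cmat" where
  "mident = (\<lambda>i j. if i = j then 1 else 0)"

definition mcnj :: "'a cmat \<Rightarrow> 'a cmat" where
  "mcnj U = (\<lambda>i j. cnj (U i j))"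

lemma mmult_mident_left [simp]: "mmult mident A = A"
  by (simp add: mmult_def mident_def if_zero_simps)

lemma mmult_mident_right [simp]: "mmult A mident = A"
  by (simp add: mmult_def mident_def if_zero_simps)

lemma mmult_assoc: "mmult (mmult A B) C = mmult A (mmult B C)"
proof (intro ext)
  fix i k
  have "mmult (mmult A B) C i k = (\<Sum>j\<in>UNIV. \<Sum>l\<in>UNIV. A i l * B l j * C j k)"
    unfolding mmult_def by (simp add: sum_distrib_right)
  also have "\<dots> = (\<Sum>l\<in>UNIV. \<Sum>j\<in>UNIV. A i l * B l j * C j k)"
    by (rule sum.swap)
  also have "\<dots> = mmult A (mmult B C) i k"
    unfolding mmult_def by (simp add: sum_distrib_left mult_ac)
  finally show "mmult (mmult A B) C i k = mmult A (mmult B C) i k" .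
qed

lemma madj_mmult: "madj (mmult A B) = mmult (madj B) (madj A)"
  unfolding madj_def mmult_def by (simp add: mult_ac)

lemma madj_madj [simp]: "madj (madj A) = A"
  unfolding madj_def by simp

lemma madj_mident [simp]: "madj mident = mident"
  unfolding madj_def mident_def by (auto simp: fun_eq_iff)

lemma madj_mtensor: "madj (mtensor A B) = mtensor (madj A) (madj B)"
  unfolding madj_def mtensor_def by (auto simp: fun_eq_iff)

lemma mtensor_mmult: "mmult (mtensor A B) (mtensor C D) = mtensor (mmult A C) (mmult B D)"
  unfolding mmult_def mtensor_def by (auto simp: fun_eq_iff sum_UNIV_prod sum_product mult_ac)

lemma mtensor_mident [simp]: "mtensor mident mident = mident"
  unfolding mtensor_def mident_def by (auto simp: fun_eq_iff)

lemma mtrace_mmult_commute: "mtrace (mmult A B) = mtrace (mmult B A)"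
  unfolding mtrace_def mmult_def by (subst sum.swap) (simp add: mult_ac)

lemma mtrace_madj: "mtrace (madj A) = cnj (mtrace A)"
  unfolding mtrace_def madj_def by simp

lemma mtrace_mmult_mcnj: "mtrace (mmult A (mcnj B)) = cnj (mtrace (mmult (mcnj A) B))"
  unfolding mtrace_def mmult_def mcnj_def by simp

lemma mtrace_mtensor: "mtrace (mtensor A B) = mtrace A * mtrace B"
  unfolding mtrace_def mtensor_def sum_UNIV_prod sum_product by simp

lemma mtrace_lincomb: "mtrace (\<lambda>x y. a * A x y + b * B x y) = a * mtrace A + b * mtrace B"
  unfolding mtrace_def by (simp add: sum.distrib sum_distrib_left)

lemma mtrace_mmult_lincomb:
  "mtrace (mmult (\<lambda>x y. a * A x y + b * B x y) T) = a * mtrace (mmult A T) + b * mtrace (mmult B T)"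
  unfolding mtrace_def mmult_def by (simp add: algebra_simps sum.distrib sum_distrib_left)

lemma mtrace_sum: "mtrace (\<lambda>x y. \<Sum>i\<in>I. c i * \<tau> i x y) = (\<Sum>i\<in>I. c i * mtrace (\<tau> i))"
  unfolding mtrace_def by (simp add: sum_distrib_left) (rule sum.swap)

lemma qform_lincomb: "qform (\<lambda>x y. a * A x y + b * B x y) v = a * qform A v + b * qform B v"
  unfolding qform_def by (simp add: algebra_simps sum.distrib sum_distrib_left)

lemma qform_sum: "qform (\<lambda>x y. \<Sum>i\<in>I. c i * \<tau> i x y) v = (\<Sum>i\<in>I. c i * qform (\<tau> i) v)"
  unfolding qform_def
  by (simp add: sum_distrib_left sum_distrib_right mult_ac sum.swap[of _ UNIV I])

lemma qform_mident: "qform mident v = (\<Sum>i\<in>UNIV. cnj (v i) * v i)"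
  unfolding qform_def mident_def by (simp add: if_zero_simps)

lemma cnj_mult_self_nonneg: "Im (cnj z * z) = 0 \<and> 0 \<le> Re (cnj z * z)"
  by simp

lemma hermitian_entry: "hermitian A \<Longrightarrow> cnj (A j i) = A i j"
  unfolding hermitian_def madj_def by metis

lemma hermitian_mcnj: "hermitian A \<Longrightarrow> hermitian (mcnj A)"
  unfolding hermitian_def madj_def mcnj_def by (metis complex_cnj_cnj)

lemma mtrace_mmult_ptrace_B:
  fixes \<rho> :: "('a::finite \<times> 'b::finite) cmat"
  shows "mtrace (mmult (ptrace_B \<rho>) X) = mtrace (mmult \<rho> (mtensor X mident))"
proof -
  have "mtrace (mmult \<rho> (mtensor X mident))
      = (\<Sum>a\<in>UNIV. \<Sum>b\<in>UNIV. \<Sum>a'\<in>UNIV. \<rho> (a, b) (a', b) * X a' a)"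
    unfolding mtrace_def mmult_def mtensor_def mident_def
    by (simp add: sum_UNIV_prod if_zero_simps)
  also have "\<dots> = mtrace (mmult (ptrace_B \<rho>) X)"
    unfolding mtrace_def mmult_def ptrace_B_def
    by (simp add: sum_distrib_right) (rule sum.cong[OF refl], rule sum.swap)
  finally show ?thesis ..
qed

lemma mtrace_mmult_ptrace_A:
  fixes \<rho> :: "('a::finite \<times> 'b::finite) cmat"
  shows "mtrace (mmult (ptrace_A \<rho>) Y) = mtrace (mmult \<rho> (mtensor mident Y))"
proof -
  have "mtrace (mmult \<rho> (mtensor mident Y))
      = (\<Sum>a\<in>UNIV. \<Sum>b\<in>UNIV. \<Sum>b'\<in>UNIV. \<rho> (a, b) (a, b') * Y b' b)"
    unfolding mtrace_def mmult_def mtensor_def mident_def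
    by (simp add: sum_UNIV_prod if_zero_simps)
  also have "\<dots> = mtrace (mmult (ptrace_A \<rho>) Y)"
    unfolding mtrace_def mmult_def ptrace_A_def
    by (simp add: sum_distrib_right) (subst sum.swap, rule sum.cong[OF refl], rule sum.swap)
  finally show ?thesis ..
qed

lemma mtrace_ptrace_B: "mtrace (ptrace_B \<sigma>) = mtrace \<sigma>"
  unfolding mtrace_def ptrace_B_def by (simp add: sum_UNIV_prod)

lemma mtrace_ptrace_A: "mtrace (ptrace_A \<sigma>) = mtrace \<sigma>"
  unfolding mtrace_def ptrace_A_def by (simp add: sum_UNIV_prod) (rule sum.swap)

lemma hermitian_ptrace_B:
  assumes "hermitian \<sigma>"
  shows "hermitian (ptrace_B \<sigma>)"
  using hermitian_entry[OF assms] unfolding hermitian_def madj_def ptrace_B_def by (simp add: fun_eq_iff)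

lemma hermitian_ptrace_A:
  assumes "hermitian \<sigma>"
  shows "hermitian (ptrace_A \<sigma>)"
  using hermitian_entry[OF assms] unfolding hermitian_def madj_def ptrace_A_def by (simp add: fun_eq_iff)

definition unitary :: "('a::finite) cmat \<Rightarrow> bool" where
  "unitary U \<longleftrightarrow> mmult (madj U) U = mident \<and> mmult U (madj U) = mident"

definition sandwich :: "('a::finite) cmat \<Rightarrow> 'a cmat \<Rightarrow> 'a cmat" where
  "sandwich W \<sigma> = mmult (mmult W \<sigma>) (madj W)"

lemma unitary_madj: "unitary U \<Longrightarrow> unitary (madj U)"
  unfolding unitary_def by simp

lemma unitary_mmult: "unitary A \<Longrightarrow> unitary B \<Longrightarrow> unitary (mmult A B)"
  unfolding unitary_def
  by (simp add: madj_mmult mmult_assoc) (metis mmult_assoc mmult_mident_left)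

lemma unitary_mcnj: "unitary U \<Longrightarrow> unitary (mcnj U)"
proof -
  have "mmult (madj (mcnj A)) (mcnj B) = mcnj (mmult (madj A) B)"
    and "mmult (mcnj B) (madj (mcnj A)) = mcnj (mmult B (madj A))" for A B :: "'a cmat"
    unfolding mmult_def madj_def mcnj_def by simp_all
  moreover have "mcnj mident = mident" unfolding mcnj_def mident_def by (simp add: fun_eq_iff)
  ultimately show "unitary U \<Longrightarrow> unitary (mcnj U)" unfolding unitary_def by metis
qed

lemma unitary_mtensor: "unitary U \<Longrightarrow> unitary V \<Longrightarrow> unitary (mtensor U V)"
  unfolding unitary_def by (simp add: madj_mtensor mtensor_mmult)

lemma unitary_mmult_cancel: "unitary W \<Longrightarrow> mmult (madj W) (mmult W Z) = Z"
  unfolding unitary_def by (metis mmult_assoc mmult_mident_left)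

lemma sandwich_entry: "sandwich W \<sigma> x y = (\<Sum>k\<in>UNIV. \<Sum>l\<in>UNIV. W x k * \<sigma> k l * cnj (W y l))"
  unfolding sandwich_def mmult_def madj_def by (simp add: sum_distrib_right) (rule sum.swap)

lemma madj_sandwich: "madj (sandwich W A) = sandwich W (madj A)"
  unfolding sandwich_def by (simp add: madj_mmult mmult_assoc)

lemma sandwich_mtensor: "sandwich (mtensor U V) (mtensor A B) = mtensor (sandwich U A) (sandwich V B)"
  unfolding sandwich_def by (simp add: madj_mtensor mtensor_mmult)

lemma sandwich_mident: "unitary W \<Longrightarrow> sandwich W mident = mident"
  unfolding sandwich_def unitary_def by simp

lemma sandwich_mmult_madj:
  "unitary W \<Longrightarrow> sandwich W (mmult X (madj X)) = mmult (sandwich W X) (madj (sandwich W X))"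
  unfolding sandwich_def by (simp add: madj_mmult mmult_assoc unitary_mmult_cancel)

lemma mtrace_mmult_sandwich: "mtrace (mmult (sandwich W \<sigma>) T) = mtrace (mmult \<sigma> (sandwich (madj W) T))"
  unfolding sandwich_def
  by (simp add: mmult_assoc mtrace_mmult_commute[of W "mmult \<sigma> (mmult (madj W) T)"])

lemma qform_sandwich: "qform (sandwich W \<sigma>) v = qform \<sigma> (\<lambda>k. \<Sum>i\<in>UNIV. cnj (W i k) * v i)"
proof -
  have "qform (sandwich W \<sigma>) v
      = (\<Sum>i\<in>UNIV. \<Sum>j\<in>UNIV. \<Sum>l\<in>UNIV. \<Sum>k\<in>UNIV. cnj (v i) * W i k * \<sigma> k l * cnj (W j l) * v j)"
    unfolding qform_def sandwich_def mmult_def madj_def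
    by (simp add: sum_distrib_left sum_distrib_right mult_ac)
  also have "\<dots> = (\<Sum>k\<in>UNIV. \<Sum>l\<in>UNIV. \<Sum>i\<in>UNIV. \<Sum>j\<in>UNIV. cnj (v i) * W i k * \<sigma> k l * cnj (W j l) * v j)"
    by (subst sum_swap_2_2) (rule sum.swap)
  also have "\<dots> = qform \<sigma> (\<lambda>k. \<Sum>i\<in>UNIV. cnj (W i k) * v i)"
    unfolding qform_def by (simp add: sum_distrib_left sum_distrib_right mult_ac)
  finally show ?thesis .
qed

lemma density_sandwich:
  assumes "unitary W" "density \<sigma>"
  shows "density (sandwich W \<sigma>)"
proof -
  have "hermitian (sandwich W \<sigma>)"
    using assms(2) unfolding density_def hermitian_def by (simp add: madj_sandwich)
  moreover have "psd (sandwich W \<sigma>)"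
    using assms(2) unfolding density_def psd_def qform_sandwich by simp
  moreover have "mtrace (sandwich W \<sigma>) = mtrace \<sigma>"
    using mtrace_mmult_sandwich[of W \<sigma> mident] assms(1) by (simp add: sandwich_mident unitary_madj)
  ultimately show ?thesis using assms(2) unfolding density_def by simp
qed

definition basis_proj :: "'a \<Rightarrow> 'a cmat" where
  "basis_proj z = (\<lambda>x y. if x = z \<and> y = z then 1 else 0)"

lemma qform_basis_proj: "qform (basis_proj z) v = cnj (v z) * v z"
  unfolding qform_def basis_proj_def by (simp add: if_zero_simps)

lemma density_basis_proj: "density (basis_proj (z::'a::finite))"
proof -
  have "hermitian (basis_proj z)"
    unfolding hermitian_def madj_def basis_proj_def by (auto simp: fun_eq_iff)
  moreover have "psd (basis_proj z)"
    unfolding psd_def qform_basis_proj by simp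
  moreover have "mtrace (basis_proj z) = 1"
    unfolding mtrace_def basis_proj_def by simp
  ultimately show ?thesis unfolding density_def by simp
qed

lemma basis_proj_Pair: "basis_proj (a, b) = mtensor (basis_proj a) (basis_proj b)"
  unfolding basis_proj_def mtensor_def by (auto simp: fun_eq_iff)

lemma ptrace_B_basis_proj: "ptrace_B (basis_proj (a, b::'b::finite)) = basis_proj a"
  unfolding ptrace_B_def basis_proj_def by (auto simp: fun_eq_iff if_zero_simps)

lemma mtrace_mmult_basis_proj: "mtrace (mmult (basis_proj z) X) = X z z"
  unfolding mtrace_def mmult_def basis_proj_def by (simp add: if_zero_simps)

section \<open>Cauchy--Schwarz for a positive semidefinite weight\<close>

definition hs_form :: "('n::finite) cmat \<Rightarrow> 'n cmat \<Rightarrow> 'n cmat \<Rightarrow> complex" where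
  "hs_form \<rho> U W = mtrace (mmult (madj U) (mmult \<rho> W))"

lemma hs_form_expand: "hs_form \<rho> U W = (\<Sum>k\<in>UNIV. \<Sum>i\<in>UNIV. \<Sum>j\<in>UNIV. cnj (U i k) * \<rho> i j * W j k)"
  unfolding hs_form_def mtrace_def mmult_def madj_def by (simp add: sum_distrib_left mult.assoc)

lemma hs_form_eq_mtrace: "hs_form \<rho> U W = mtrace (mmult \<rho> (mmult W (madj U)))"
  unfolding hs_form_def by (subst mtrace_mmult_commute) (simp add: mmult_assoc)

lemma hs_form_self: "hs_form \<rho> U U = (\<Sum>k\<in>UNIV. qform \<rho> (\<lambda>i. U i k))"
  unfolding hs_form_expand qform_def ..

lemma
  assumes "psd \<rho>"
  shows hs_form_self_real: "Im (hs_form \<rho> U U) = 0"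
    and hs_form_self_nonneg: "0 \<le> Re (hs_form \<rho> U U)"
  using assms unfolding hs_form_self psd_def by (auto simp: Im_sum Re_sum intro: sum_nonneg)

lemma hs_form_swap:
  assumes "hermitian \<rho>"
  shows "hs_form \<rho> W U = cnj (hs_form \<rho> U W)"
  using assms unfolding hs_form_def hermitian_def
  by (simp add: mtrace_madj[symmetric] madj_mmult mmult_assoc)

lemma hs_form_diff:
  "hs_form \<rho> (\<lambda>i k. U i k - t * W i k) (\<lambda>i k. U i k - t * W i k)
   = hs_form \<rho> U U - t * hs_form \<rho> U W - cnj t * hs_form \<rho> W U + cnj t * t * hs_form \<rho> W W"
  unfolding hs_form_expand
  by (simp add: algebra_simps sum.distrib sum_subtractf sum_distrib_left)

lemma hs_form_cauchy_schwarz: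
  assumes "psd \<rho>" "hermitian \<rho>"
  shows "(cmod (hs_form \<rho> U W))\<^sup>2 \<le> Re (hs_form \<rho> U U) * Re (hs_form \<rho> W W)"
proof -
  define a c b where "a = Re (hs_form \<rho> U U)" and "c = Re (hs_form \<rho> W W)"
    and "b = hs_form \<rho> U W"
  have quadratic: "0 \<le> a - 2 * r * (cmod b)\<^sup>2 + r\<^sup>2 * (cmod b)\<^sup>2 * c" for r
  proof -
    define t where "t = complex_of_real r * cnj b"
    have "Re (hs_form \<rho> (\<lambda>i k. U i k - t * W i k) (\<lambda>i k. U i k - t * W i k))
        = a - 2 * r * (cmod b)\<^sup>2 + r\<^sup>2 * (cmod b)\<^sup>2 * c"
      using hs_form_self_real[OF assms(1), of U] hs_form_self_real[OF assms(1), of W] cmod_power2[of b]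
      unfolding hs_form_diff hs_form_swap[OF assms(2), of W U] a_def c_def b_def t_def
      by (simp add: power2_eq_square algebra_simps)
    with hs_form_self_nonneg[OF assms(1), of "\<lambda>i k. U i k - t * W i k"] show ?thesis
      by linarith
  qed
  have "0 \<le> c" unfolding c_def using hs_form_self_nonneg[OF assms(1)] .
  show ?thesis
  proof (cases "c = 0")
    case True
    have "(cmod b)\<^sup>2 = 0"
    proof (rule ccontr)
      assume "(cmod b)\<^sup>2 \<noteq> 0"
      then have "a - 2 * ((a + 1) / (2 * (cmod b)\<^sup>2)) * (cmod b)\<^sup>2 = -1" by (simp add: field_simps)
      then show False using quadratic[of "(a + 1) / (2 * (cmod b)\<^sup>2)"] True by simp
    qed
    then show ?thesis using True unfolding a_def[symmetric] c_def[symmetric] b_def[symmetric] by simp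
  next
    case False
    then have "0 < c" using \<open>0 \<le> c\<close> by simp
    have "0 \<le> a - 2 * (1 / c) * (cmod b)\<^sup>2 + (1 / c)\<^sup>2 * (cmod b)\<^sup>2 * c" by (rule quadratic)
    also have "\<dots> = a - (cmod b)\<^sup>2 / c" using \<open>0 < c\<close> by (simp add: power2_eq_square field_simps)
    finally show ?thesis using \<open>0 < c\<close> unfolding a_def[symmetric] c_def[symmetric] b_def[symmetric]
      by (simp add: pos_divide_le_eq mult.commute)
  qed
qed

section \<open>Maximal correlation and maximal entanglement\<close>

definition corr_feasible :: "('a::finite \<times> 'b::finite) cmat \<Rightarrow> 'a cmat \<Rightarrow> 'b cmat \<Rightarrow> bool" where
  "corr_feasible \<rho> X Y \<longleftrightarrow>
     mtrace (mmult (ptrace_B \<rho>) X) = 0 \<and> mtrace (mmult (ptrace_A \<rho>) Y) = 0 \<and>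
     mtrace (mmult (ptrace_B \<rho>) (mmult X (madj X))) = 1 \<and>
     mtrace (mmult (ptrace_A \<rho>) (mmult Y (madj Y))) = 1"

definition corr_value :: "('a::finite \<times> 'b::finite) cmat \<Rightarrow> 'a cmat \<Rightarrow> 'b cmat \<Rightarrow> real" where
  "corr_value \<rho> X Y = cmod (mtrace (mmult \<rho> (mtensor X (madj Y))))"

lemma maxcorr_eq_Sup: "maxcorr \<rho> = Sup ({0} \<union> {corr_value \<rho> X Y | X Y. corr_feasible \<rho> X Y})"
  unfolding maxcorr_def corr_feasible_def corr_value_def by simp

lemma corr_value_le_1:
  fixes \<rho> :: "('a::finite \<times> 'b::finite) cmat"
  assumes "psd \<rho>" "hermitian \<rho>"
    and "mtrace (mmult (ptrace_B \<rho>) (mmult X (madj X))) = 1"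
    and "mtrace (mmult (ptrace_A \<rho>) (mmult Y (madj Y))) = 1"
  shows "corr_value \<rho> X Y \<le> 1"
proof -
  let ?U = "mtensor mident Y" and ?W = "mtensor X mident"
  have "hs_form \<rho> ?U ?W = mtrace (mmult \<rho> (mtensor X (madj Y)))"
    and "hs_form \<rho> ?U ?U = mtrace (mmult (ptrace_A \<rho>) (mmult Y (madj Y)))"
    and "hs_form \<rho> ?W ?W = mtrace (mmult (ptrace_B \<rho>) (mmult X (madj X)))"
    unfolding hs_form_eq_mtrace mtrace_mmult_ptrace_A mtrace_mmult_ptrace_B
    by (simp_all add: madj_mtensor mtensor_mmult)
  then have "(corr_value \<rho> X Y)\<^sup>2 \<le> 1"
    using hs_form_cauchy_schwarz[OF assms(1,2), of ?U ?W] assms(3,4) unfolding corr_value_def by simp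
  then show ?thesis by (simp add: power_le_one_iff corr_value_def)
qed

lemma
  fixes \<rho> :: "('a::finite \<times> 'b::finite) cmat"
  assumes "density \<rho>"
  shows maxcorr_nonneg: "0 \<le> maxcorr \<rho>"
    and maxcorr_upper: "corr_feasible \<rho> X Y \<Longrightarrow> corr_value \<rho> X Y \<le> maxcorr \<rho>"
proof -
  have "bdd_above ({0} \<union> {corr_value \<rho> X Y | X Y. corr_feasible \<rho> X Y})"
    using assms corr_value_le_1 unfolding density_def corr_feasible_def
    by (intro bdd_aboveI[of _ 1]) auto
  then show "0 \<le> maxcorr \<rho>" "corr_feasible \<rho> X Y \<Longrightarrow> corr_value \<rho> X Y \<le> maxcorr \<rho>"
    unfolding maxcorr_eq_Sup by (auto intro!: cSup_upper)
qed

lemma maxcorr_least: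
  assumes "\<And>X Y. corr_feasible \<rho> X Y \<Longrightarrow> corr_value \<rho> X Y \<le> c" and "0 \<le> c"
  shows "maxcorr \<rho> \<le> c"
  unfolding maxcorr_eq_Sup by (rule cSup_least) (use assms in auto)

lemma mtrace_mmult_ptrace_B_sandwich:
  fixes \<sigma> :: "('a::finite \<times> 'b::finite) cmat"
  assumes "unitary V"
  shows "mtrace (mmult (ptrace_B (sandwich (mtensor U V) \<sigma>)) X)
       = mtrace (mmult (ptrace_B \<sigma>) (sandwich (madj U) X))"
  using assms unfolding mtrace_mmult_ptrace_B mtrace_mmult_sandwich
  by (simp add: madj_mtensor sandwich_mtensor sandwich_mident unitary_madj)

lemma mtrace_mmult_ptrace_A_sandwich:
  fixes \<sigma> :: "('a::finite \<times> 'b::finite) cmat"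
  assumes "unitary U"
  shows "mtrace (mmult (ptrace_A (sandwich (mtensor U V) \<sigma>)) Y)
       = mtrace (mmult (ptrace_A \<sigma>) (sandwich (madj V) Y))"
  using assms unfolding mtrace_mmult_ptrace_A mtrace_mmult_sandwich
  by (simp add: madj_mtensor sandwich_mtensor sandwich_mident unitary_madj)

lemma maxcorr_sandwich_le:
  fixes \<sigma> :: "('a::finite \<times> 'b::finite) cmat"
  assumes "unitary U" "unitary V" "density \<sigma>"
  shows "maxcorr (sandwich (mtensor U V) \<sigma>) \<le> maxcorr \<sigma>"
proof (rule maxcorr_least)
  fix X Y
  assume "corr_feasible (sandwich (mtensor U V) \<sigma>) X Y"
  then have "corr_feasible \<sigma> (sandwich (madj U) X) (sandwich (madj V) Y)"
    using assms(1,2) unfolding corr_feasible_def mtrace_mmult_ptrace_B_sandwich[OF assms(2)]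
      mtrace_mmult_ptrace_A_sandwich[OF assms(1)] by (simp add: sandwich_mmult_madj unitary_madj)
  moreover have "corr_value (sandwich (mtensor U V) \<sigma>) X Y
      = corr_value \<sigma> (sandwich (madj U) X) (sandwich (madj V) Y)"
    unfolding corr_value_def mtrace_mmult_sandwich by (simp add: madj_mtensor sandwich_mtensor madj_sandwich)
  ultimately show "corr_value (sandwich (mtensor U V) \<sigma>) X Y \<le> maxcorr \<sigma>"
    using maxcorr_upper[OF assms(3)] by simp
qed (rule maxcorr_nonneg[OF assms(3)])

lemma maxcorr_basis_proj: "maxcorr (basis_proj (a, b) :: ('a::finite \<times> 'b::finite) cmat) = 0"
proof -
  have "maxcorr (basis_proj (a, b) :: ('a \<times> 'b) cmat) \<le> 0"
  proof (rule maxcorr_least)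
    fix X :: "'a cmat" and Y :: "'b cmat"
    assume "corr_feasible (basis_proj (a, b)) X Y"
    then have "X a a = 0"
      unfolding corr_feasible_def ptrace_B_basis_proj mtrace_mmult_basis_proj by simp
    then show "corr_value (basis_proj (a, b)) X Y \<le> 0"
      unfolding corr_value_def basis_proj_Pair mtensor_mmult mtrace_mtensor mtrace_mmult_basis_proj
      by simp
  qed simp
  with maxcorr_nonneg[OF density_basis_proj] show ?thesis by (rule antisym[rotated])
qed

definition decomposition ::
    "('a::finite) cmat \<Rightarrow> nat \<Rightarrow> (nat \<Rightarrow> real) \<Rightarrow> (nat \<Rightarrow> 'a cmat) \<Rightarrow> bool" where
  "decomposition \<rho> n p \<tau> \<longleftrightarrow> 0 < n \<and> (\<forall>i<n. 0 \<le> p i \<and> density (\<tau> i)) \<and>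
     \<rho> = (\<lambda>x y. \<Sum>i<n. complex_of_real (p i) * \<tau> i x y)"

lemma maxent_eq_Inf:
  "maxent \<rho> = Inf {Max ((\<lambda>i. maxcorr (\<tau> i)) ` {..<n}) | n p \<tau>. decomposition \<rho> n p \<tau>}"
  unfolding maxent_def decomposition_def ..

lemma decomposition_weights_sum:
  assumes "density \<rho>" "decomposition \<rho> n p \<tau>"
  shows "(\<Sum>i<n. p i) = 1"
proof -
  have "1 = mtrace \<rho>" using assms(1) unfolding density_def by simp
  also have "\<dots> = (\<Sum>i<n. complex_of_real (p i))"
    using assms(2) unfolding decomposition_def density_def by (simp add: mtrace_sum)
  finally show ?thesis by (metis of_real_eq_1_iff of_real_sum)
qed

lemma decomposition_qform_le_component:
  assumes "density \<rho>" "decomposition \<rho> n p \<tau>"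
  shows "\<exists>i<n. Re (qform \<rho> v) \<le> Re (qform (\<tau> i) v)"
proof -
  define M where "M = Max ((\<lambda>i. Re (qform (\<tau> i) v)) ` {..<n})"
  have "Re (qform \<rho> v) = (\<Sum>i<n. p i * Re (qform (\<tau> i) v))"
    using assms(2) unfolding decomposition_def by (simp add: qform_sum Re_sum)
  also have "\<dots> \<le> (\<Sum>i<n. p i * M)"
    using assms(2) unfolding M_def decomposition_def by (intro sum_mono mult_left_mono Max_ge) auto
  also have "\<dots> = M"
    using decomposition_weights_sum[OF assms] by (simp flip: sum_distrib_right)
  moreover have "M \<in> (\<lambda>i. Re (qform (\<tau> i) v)) ` {..<n}"
    using assms(2) unfolding M_def decomposition_def by (intro Max_in) auto
  ultimately show ?thesis by auto
qed

lemma maxent_le: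
  fixes \<rho> :: "('a::finite \<times> 'b::finite) cmat"
  assumes "decomposition \<rho> n p \<tau>" and "\<forall>i<n. maxcorr (\<tau> i) \<le> c"
  shows "maxent \<rho> \<le> c"
proof -
  have "0 \<le> Max ((\<lambda>i. maxcorr (\<tau>' i)) ` {..<n'})" if "decomposition \<rho> n' p' \<tau>'" for n' p' \<tau>'
    using that maxcorr_nonneg[of "\<tau>' 0"] unfolding decomposition_def
    by (auto intro: order_trans[OF _ Max_ge])
  then have "maxent \<rho> \<le> Max ((\<lambda>i. maxcorr (\<tau> i)) ` {..<n})"
    unfolding maxent_eq_Inf using assms(1) by (intro cInf_lower bdd_belowI[of _ 0]) auto
  also have "\<dots> \<le> c"
    using assms unfolding decomposition_def by (simp add: Max_le_iff lessThan_empty_iff)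
  finally show ?thesis .
qed

lemma maxent_greatest:
  fixes \<rho> :: "('a::finite \<times> 'b::finite) cmat"
  assumes "density \<rho>"
    and "\<And>n p \<tau>. decomposition \<rho> n p \<tau> \<Longrightarrow> \<exists>i<n. c \<le> maxcorr (\<tau> i)"
  shows "c \<le> maxent \<rho>"
  unfolding maxent_eq_Inf
proof (rule cInf_greatest)
  have "decomposition \<rho> (Suc 0) (\<lambda>_. 1) (\<lambda>_. \<rho>)"
    using assms(1) unfolding decomposition_def by simp
  then show "{Max ((\<lambda>i. maxcorr (\<tau> i)) ` {..<n}) | n p \<tau>. decomposition \<rho> n p \<tau>} \<noteq> {}"
    by blast
  show "c \<le> m" if "m \<in> {Max ((\<lambda>i. maxcorr (\<tau> i)) ` {..<n}) | n p \<tau>. decomposition \<rho> n p \<tau>}" for m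
  proof -
    from that obtain n p \<tau> where m: "m = Max ((\<lambda>i. maxcorr (\<tau> i)) ` {..<n})"
      and "decomposition \<rho> n p \<tau>"
      by blast
    then obtain i where "i < n" "c \<le> maxcorr (\<tau> i)" using assms(2) by blast
    then show ?thesis unfolding m by (auto intro: order_trans[OF _ Max_ge])
  qed
qed

lemma cnj_psi [simp]: "cnj (psi k) = psi k"
  unfolding psi_def by (simp add: case_prod_beta)

lemma psi_mult_psi: "psi x * psi y = (if fst x = snd x \<and> fst y = snd y then 1 / 2 else 0)"
proof -
  have "complex_of_real (1 / sqrt 2) * complex_of_real (1 / sqrt 2) = 1 / 2"
    by (simp flip: of_real_mult)
  then show ?thesis unfolding psi_def by (simp add: case_prod_beta)
qed

definition bell_proj :: "(bool \<times> bool) cmat" where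
  "bell_proj = (\<lambda>x y. psi x * cnj (psi y))"

lemma bell_proj_eq: "bell_proj x y = (if fst x = snd x \<and> fst y = snd y then 1 / 2 else 0)"
  unfolding bell_proj_def cnj_psi psi_mult_psi ..

lemma qform_bell_proj:
  "qform bell_proj v = cnj (\<Sum>j\<in>UNIV. psi j * v j) * (\<Sum>j\<in>UNIV. psi j * v j)"
  unfolding qform_def bell_proj_def
  by (simp add: sum_product sum_distrib_left mult_ac)

lemma density_bell_proj: "density bell_proj"
proof -
  have "hermitian bell_proj"
    unfolding hermitian_def madj_def bell_proj_def by (simp add: fun_eq_iff mult.commute)
  moreover have "psd bell_proj"
    unfolding psd_def qform_bell_proj using cnj_mult_self_nonneg by blast
  moreover have "mtrace bell_proj = 1"
    unfolding mtrace_def bell_proj_eq by (simp add: sum_UNIV_prod UNIV_bool)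
  ultimately show ?thesis unfolding density_def by simp
qed

lemma rho_eps_eq:
  "rho_eps \<epsilon> = (\<lambda>x y. complex_of_real (1 - \<epsilon>) * bell_proj x y + complex_of_real (\<epsilon> / 4) * mident x y)"
  unfolding rho_eps_def bell_proj_def mident_def by (simp add: fun_eq_iff mult.assoc)

lemma density_rho_eps:
  assumes "0 \<le> \<epsilon>" "\<epsilon> \<le> 1"
  shows "density (rho_eps \<epsilon>)"
proof -
  have "hermitian (rho_eps \<epsilon>)"
    unfolding hermitian_def madj_def rho_eps_eq bell_proj_def mident_def
    by (simp add: fun_eq_iff mult.commute)
  moreover have "psd (rho_eps \<epsilon>)"
    unfolding psd_def
  proof
    fix v :: "bool \<times> bool \<Rightarrow> complex"
    have "0 \<le> Re (qform mident v)" and "Im (qform mident v) = 0"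
      unfolding qform_mident by (simp_all add: Re_sum Im_sum sum_nonneg)
    moreover have "0 \<le> Re (qform bell_proj v)" and "Im (qform bell_proj v) = 0"
      using density_bell_proj unfolding density_def psd_def by auto
    ultimately show "Im (qform (rho_eps \<epsilon>) v) = 0 \<and> 0 \<le> Re (qform (rho_eps \<epsilon>) v)"
      using assms unfolding rho_eps_eq qform_lincomb by simp
  qed
  moreover have "mtrace (rho_eps \<epsilon>) = 1"
  proof -
    have "mtrace (mident :: (bool \<times> bool) cmat) = 4"
      unfolding mtrace_def mident_def
      by (simp add: card_cartesian_product flip: UNIV_Times_UNIV)
    then show ?thesis
      using density_bell_proj unfolding rho_eps_eq mtrace_lincomb density_def by simp
  qed
  ultimately show ?thesis unfolding density_def by simp
qed

lemma qform_rho_eps_psi: "qform (rho_eps \<epsilon>) psi = complex_of_real (1 - 3 * \<epsilon> / 4)"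
proof -
  have "qform bell_proj psi = 1" and "qform mident psi = 1"
    unfolding qform_bell_proj qform_mident cnj_psi psi_mult_psi by (simp_all add: sum_UNIV_prod UNIV_bool)
  then show ?thesis unfolding rho_eps_eq qform_lincomb by (simp add: algebra_simps)
qed

lemma
  shows ptrace_B_bell_proj: "ptrace_B bell_proj = (\<lambda>a a'. mident a a' / 2)"
    and ptrace_A_bell_proj: "ptrace_A bell_proj = (\<lambda>b b'. mident b b' / 2)"
    and ptrace_B_rho_eps: "ptrace_B (rho_eps \<epsilon>) = (\<lambda>a a'. mident a a' / 2)"
    and ptrace_A_rho_eps: "ptrace_A (rho_eps \<epsilon>) = (\<lambda>b b'. mident b b' / 2)"
  unfolding ptrace_B_def ptrace_A_def rho_eps_eq bell_proj_eq mident_def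
  by (auto simp: fun_eq_iff UNIV_bool field_simps)

lemma mtrace_mmult_half_mident: "mtrace (mmult (\<lambda>a a'. mident a a' / 2) X) = mtrace X / 2"
  unfolding mtrace_def mmult_def mident_def by (simp add: if_zero_simps sum_divide_distrib)

lemma maxcorr_rho_eps_le:
  assumes "0 \<le> \<epsilon>" "\<epsilon> \<le> 1"
  shows "maxcorr (rho_eps \<epsilon>) \<le> 1 - \<epsilon>"
proof (rule maxcorr_least)
  fix X Y
  assume feasible: "corr_feasible (rho_eps \<epsilon>) X Y"
  then have "corr_feasible bell_proj X Y"
    unfolding corr_feasible_def ptrace_B_rho_eps ptrace_A_rho_eps ptrace_B_bell_proj ptrace_A_bell_proj .
  then have "corr_value bell_proj X Y \<le> 1"
    using density_bell_proj corr_value_le_1 unfolding density_def corr_feasible_def by blast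
  from feasible have "mtrace X = 0"
    unfolding corr_feasible_def ptrace_B_rho_eps mtrace_mmult_half_mident by simp
  moreover have "cmod (1 - complex_of_real \<epsilon>) = 1 - \<epsilon>"
    using assms by (metis abs_of_nonneg diff_ge_0_iff_ge norm_of_real of_real_1 of_real_diff)
  ultimately have "corr_value (rho_eps \<epsilon>) X Y = (1 - \<epsilon>) * corr_value bell_proj X Y"
    unfolding corr_value_def rho_eps_eq mtrace_mmult_lincomb mmult_mident_left mtrace_mtensor
    by (simp add: norm_mult)
  with \<open>corr_value bell_proj X Y \<le> 1\<close> show "corr_value (rho_eps \<epsilon>) X Y \<le> 1 - \<epsilon>"
    using assms by (simp add: mult_left_le)
qed (use assms in simp)

definition isotropic :: "real \<Rightarrow> (bool \<times> bool) cmat" where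
  "isotropic F = (\<lambda>x y. complex_of_real F * bell_proj x y
                      + complex_of_real (1 - F) * (mident x y - bell_proj x y) / 3)"

lemma rho_eps_isotropic: "rho_eps \<epsilon> = isotropic (1 - 3 * \<epsilon> / 4)"
  unfolding rho_eps_eq isotropic_def by (simp add: fun_eq_iff field_simps)

lemma isotropic_mix:
  "complex_of_real t * isotropic a x y + complex_of_real (1 - t) * isotropic b x y
   = isotropic (t * a + (1 - t) * b) x y"
  unfolding isotropic_def by (simp add: field_simps)

section \<open>Twirling\<close>

(* The matrix [[a, b], [c, d]]; False indexes the first row and column. *)
definition qubit_mat :: "complex \<Rightarrow> complex \<Rightarrow> complex \<Rightarrow> complex \<Rightarrow> bool cmat" where
  "qubit_mat a b c d = (\<lambda>i j. if i then if j then d else c else if j then b else a)"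

lemma qubit_mat_eq_iff [simp]:
  "qubit_mat a b c d = qubit_mat a' b' c' d' \<longleftrightarrow> a = a' \<and> b = b' \<and> c = c' \<and> d = d'"
  unfolding qubit_mat_def fun_eq_iff all_bool_eq by auto

lemma mmult_qubit_mat:
  "mmult (qubit_mat a b c d) (qubit_mat a' b' c' d')
   = qubit_mat (a * a' + b * c') (a * b' + b * d') (c * a' + d * c') (c * b' + d * d')"
  unfolding mmult_def qubit_mat_def by (simp add: fun_eq_iff UNIV_bool)

lemma madj_qubit_mat: "madj (qubit_mat a b c d) = qubit_mat (cnj a) (cnj c) (cnj b) (cnj d)"
  unfolding madj_def qubit_mat_def by (simp add: fun_eq_iff)

lemma mident_qubit_mat: "mident = qubit_mat 1 0 0 1"
  unfolding mident_def qubit_mat_def by (simp add: fun_eq_iff)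

definition paulis :: "bool cmat list" where
  "paulis = [qubit_mat 1 0 0 1, qubit_mat 0 1 1 0, qubit_mat 0 (- \<i>) \<i> 0, qubit_mat 1 0 0 (- 1)]"

definition clifford_C :: "bool cmat" where
  "clifford_C = qubit_mat ((1 - \<i>) / 2) ((- 1 - \<i>) / 2) ((1 - \<i>) / 2) ((1 + \<i>) / 2)"

(* The tetrahedral group modulo phases: a unitary 2-design. *)
definition tetrahedral_unitaries :: "bool cmat list" where
  "tetrahedral_unitaries = [mmult P C. C \<leftarrow> [mident, clifford_C, mmult clifford_C clifford_C], P \<leftarrow> paulis]"

lemma tetrahedral_unitaries_eq:
  "tetrahedral_unitaries =
    [qubit_mat 1 0 0 1,
     qubit_mat 0 1 1 0,
     qubit_mat 0 (- \<i>) \<i> 0,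
     qubit_mat 1 0 0 (- 1),
     qubit_mat (Complex (1/2) (-1/2)) (Complex (-1/2) (-1/2)) (Complex (1/2) (-1/2)) (Complex (1/2) (1/2)),
     qubit_mat (Complex (1/2) (-1/2)) (Complex (1/2) (1/2)) (Complex (1/2) (-1/2)) (Complex (-1/2) (-1/2)),
     qubit_mat (Complex (-1/2) (-1/2)) (Complex (1/2) (-1/2)) (Complex (1/2) (1/2)) (Complex (1/2) (-1/2)),
     qubit_mat (Complex (1/2) (-1/2)) (Complex (-1/2) (-1/2)) (Complex (-1/2) (1/2)) (Complex (-1/2) (-1/2)),
     qubit_mat (Complex (-1/2) (-1/2)) (Complex (-1/2) (-1/2)) (Complex (1/2) (-1/2)) (Complex (-1/2) (1/2)),
     qubit_mat (Complex (1/2) (-1/2)) (Complex (-1/2) (1/2)) (Complex (-1/2) (-1/2)) (Complex (-1/2) (-1/2)),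
     qubit_mat (Complex (-1/2) (-1/2)) (Complex (1/2) (1/2)) (Complex (1/2) (-1/2)) (Complex (1/2) (-1/2)),
     qubit_mat (Complex (-1/2) (-1/2)) (Complex (-1/2) (-1/2)) (Complex (-1/2) (1/2)) (Complex (1/2) (-1/2))]"
  unfolding tetrahedral_unitaries_def paulis_def clifford_C_def mident_qubit_mat
  by (simp add: mmult_qubit_mat complex_eq_iff)

lemma length_tetrahedral_unitaries: "length tetrahedral_unitaries = 12"
  unfolding tetrahedral_unitaries_def paulis_def by simp

lemma unitary_tetrahedral: "U \<in> set tetrahedral_unitaries \<Longrightarrow> unitary U"
proof -
  have "unitary P" if "P \<in> set paulis" for P
    using that unfolding paulis_def unitary_def mident_qubit_mat
    by (auto simp: mmult_qubit_mat madj_qubit_mat complex_eq_iff)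
  moreover have "unitary clifford_C"
    unfolding clifford_C_def unitary_def mident_qubit_mat
    by (simp add: mmult_qubit_mat madj_qubit_mat complex_eq_iff)
  moreover have "unitary (mident :: bool cmat)" unfolding unitary_def by simp
  ultimately show "U \<in> set tetrahedral_unitaries \<Longrightarrow> unitary U"
    unfolding tetrahedral_unitaries_def by (auto intro!: unitary_mmult)
qed

lemma tetrahedral_kernel:
  "(\<Sum>U\<leftarrow>tetrahedral_unitaries. U a1 c1 * cnj (U a2 c2) * cnj (U b1 d1 * cnj (U b2 d2))) / 12
   = bell_proj (a1, a2) (b1, b2) * bell_proj (d1, d2) (c1, c2)
     + (mident (a1, a2) (b1, b2) - bell_proj (a1, a2) (b1, b2))
       * (mident (d1, d2) (c1, c2) - bell_proj (d1, d2) (c1, c2)) / 3"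
  unfolding tetrahedral_unitaries_eq
  by (cases a1; cases a2; cases b1; cases b2; cases c1; cases c2; cases d1; cases d2)
    (simp_all add: qubit_mat_def bell_proj_eq mident_def complex_eq_iff)

definition twirl_unitary :: "nat \<Rightarrow> (bool \<times> bool) cmat" where
  "twirl_unitary i = mtensor (tetrahedral_unitaries ! i) (mcnj (tetrahedral_unitaries ! i))"

lemma unitary_twirl_unitary: "i < 12 \<Longrightarrow> unitary (twirl_unitary i)"
  unfolding twirl_unitary_def
  by (intro unitary_mtensor unitary_mcnj unitary_tetrahedral nth_mem)
    (simp_all add: length_tetrahedral_unitaries)

lemma twirl_kernel:
  "(\<Sum>i<12. twirl_unitary i x k * cnj (twirl_unitary i y l)) / 12
   = bell_proj x y * bell_proj l k + (mident x y - bell_proj x y) * (mident l k - bell_proj l k) / 3"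
proof -
  obtain a1 a2 b1 b2 c1 c2 d1 d2 where "x = (a1, a2)" "y = (b1, b2)" "k = (c1, c2)" "l = (d1, d2)"
    by (cases x; cases y; cases k; cases l)
  moreover have "(\<Sum>i<12. twirl_unitary i (a1, a2) (c1, c2) * cnj (twirl_unitary i (b1, b2) (d1, d2)))
      = (\<Sum>U\<leftarrow>tetrahedral_unitaries. U a1 c1 * cnj (U a2 c2) * cnj (U b1 d1 * cnj (U b2 d2)))"
    unfolding sum_list_sum_nth twirl_unitary_def mtensor_def mcnj_def
    by (simp add: atLeast0LessThan length_tetrahedral_unitaries)
  ultimately show ?thesis using tetrahedral_kernel by simp
qed

definition twirl :: "(bool \<times> bool) cmat \<Rightarrow> (bool \<times> bool) cmat" where
  "twirl \<sigma> = (\<lambda>x y. \<Sum>i<12. complex_of_real (1 / 12) * sandwich (twirl_unitary i) \<sigma> x y)"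

lemma twirl_isotropic:
  assumes "density \<sigma>"
  shows "twirl \<sigma> = isotropic (Re (qform \<sigma> psi))"
proof (intro ext)
  fix x y
  define A B where "A = bell_proj x y" and "B = (mident x y - bell_proj x y) / 3"
  have fidelity: "qform \<sigma> psi = (\<Sum>k\<in>UNIV. \<Sum>l\<in>UNIV. \<sigma> k l * bell_proj l k)"
    unfolding qform_def bell_proj_def by (simp add: mult_ac)
  have trace: "1 = (\<Sum>k\<in>UNIV. \<Sum>l\<in>UNIV. \<sigma> k l * mident l k)"
    using assms unfolding density_def mtrace_def mident_def by (simp add: if_zero_simps)
  have "twirl \<sigma> x y
      = (\<Sum>k\<in>UNIV. \<Sum>l\<in>UNIV. \<sigma> k l * ((\<Sum>i<12. twirl_unitary i x k * cnj (twirl_unitary i y l)) / 12))"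
    unfolding twirl_def sandwich_entry
    by (simp add: sum_distrib_left sum_divide_distrib mult_ac sum.swap[of _ "{..<12::nat}"])
  also have "\<dots> = (\<Sum>k\<in>UNIV. \<Sum>l\<in>UNIV. \<sigma> k l * (A * bell_proj l k + B * (mident l k - bell_proj l k)))"
    unfolding twirl_kernel A_def B_def by simp
  also have "\<dots> = A * qform \<sigma> psi + B * (1 - qform \<sigma> psi)"
    unfolding fidelity trace by (simp add: algebra_simps sum.distrib sum_subtractf sum_distrib_left)
  also have "\<dots> = isotropic (Re (qform \<sigma> psi)) x y"
  proof -
    define r where "r = Re (qform \<sigma> psi)"
    have "qform \<sigma> psi = complex_of_real r"
      using assms unfolding density_def psd_def r_def by (simp add: complex_eq_iff)
    then show ?thesis unfolding isotropic_def A_def B_def by simp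
  qed
  finally show "twirl \<sigma> x y = isotropic (Re (qform \<sigma> psi)) x y" .
qed

lemma rho_eps_twirl_mixture:
  assumes "density \<sigma>" and "t * Re (qform \<sigma> psi) = 1 - 3 * \<epsilon> / 4"
  shows "rho_eps \<epsilon> x y
       = complex_of_real t * twirl \<sigma> x y + complex_of_real (1 - t) * twirl (basis_proj (False, True)) x y"
proof -
  have "qform (basis_proj (False, True)) psi = 0" unfolding qform_basis_proj psi_def by simp
  then show ?thesis
    unfolding twirl_isotropic[OF assms(1)] twirl_isotropic[OF density_basis_proj] isotropic_mix
      rho_eps_isotropic assms(2)[symmetric]
    by simp
qed

lemma maxcorr_sandwich_twirl_unitary_le:
  "j < 12 \<Longrightarrow> density \<rho> \<Longrightarrow> maxcorr (sandwich (twirl_unitary j) \<rho>) \<le> maxcorr \<rho>"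
  unfolding twirl_unitary_def
  by (intro maxcorr_sandwich_le unitary_mcnj unitary_tetrahedral nth_mem)
    (simp_all add: length_tetrahedral_unitaries)

lemma maxent_rho_eps_le:
  assumes "0 \<le> \<epsilon>" "\<epsilon> \<le> 1" and "density \<sigma>" and "1 - 3 * \<epsilon> / 4 \<le> Re (qform \<sigma> psi)"
  shows "maxent (rho_eps \<epsilon>) \<le> maxcorr \<sigma>"
proof (rule maxent_le)
  define e01 :: "(bool \<times> bool) cmat" where "e01 = basis_proj (False, True)"
  define t where "t = (1 - 3 * \<epsilon> / 4) / Re (qform \<sigma> psi)"
  define p where "p i = (if i < 12 then t / 12 else (1 - t) / 12)" for i :: nat
  define \<tau> where "\<tau> i = (if i < 12 then sandwich (twirl_unitary i) \<sigma> else sandwich (twirl_unitary (i - 12)) e01)"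
    for i :: nat
  have "0 < Re (qform \<sigma> psi)" using assms(2,4) by linarith
  then have t: "0 \<le> t" "t \<le> 1" "t * Re (qform \<sigma> psi) = 1 - 3 * \<epsilon> / 4"
    using assms(1,2,4) unfolding t_def by (simp_all add: field_simps)
  have "density e01" unfolding e01_def by (rule density_basis_proj)
  have "rho_eps \<epsilon> = (\<lambda>x y. \<Sum>i<12 + 12. complex_of_real (p i) * \<tau> i x y)"
    unfolding fun_eq_iff rho_eps_twirl_mixture[OF assms(3) t(3)] sum_lessThan_add p_def \<tau>_def twirl_def e01_def
    by (simp add: sum_distrib_left)
  then show "decomposition (rho_eps \<epsilon>) (12 + 12) p \<tau>"
    using t(1,2) assms(3) \<open>density e01\<close> unfolding decomposition_def p_def \<tau>_def
    by (auto intro!: density_sandwich unitary_twirl_unitary)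
  have "maxcorr e01 \<le> maxcorr \<sigma>"
    unfolding e01_def maxcorr_basis_proj using maxcorr_nonneg[OF assms(3)] .
  show "\<forall>i<12 + 12. maxcorr (\<tau> i) \<le> maxcorr \<sigma>"
  proof (intro allI impI)
    fix i :: nat
    assume "i < 12 + 12"
    show "maxcorr (\<tau> i) \<le> maxcorr \<sigma>"
    proof (cases "i < 12")
      case True
      then show ?thesis unfolding \<tau>_def by (simp add: maxcorr_sandwich_twirl_unitary_le assms(3))
    next
      case False
      then have "maxcorr (\<tau> i) \<le> maxcorr e01"
        using \<open>i < 12 + 12\<close> \<open>density e01\<close> unfolding \<tau>_def by (simp add: maxcorr_sandwich_twirl_unitary_le)
      with \<open>maxcorr e01 \<le> maxcorr \<sigma>\<close> show ?thesis by linarith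
    qed
  qed
qed

section \<open>A correlation witness\<close>

lemma unit_vector_orthogonal_to_two:
  fixes a b :: "'a::euclidean_space"
  assumes "2 < DIM('a)"
  obtains n where "norm n = 1" "inner a n = 0" "inner b n = 0"
proof -
  have "dim {a, b} \<le> card {a, b}" by (rule dim_le_card) (auto intro: span_base)
  also have "\<dots> \<le> 2" by (simp add: card_insert_le_m1)
  finally obtain x where "x \<noteq> 0" and x: "\<And>y. y \<in> span {a, b} \<Longrightarrow> orthogonal x y"
    using assms by (metis orthogonal_to_subspace_exists order_le_less_trans)
  show thesis
  proof
    show "norm (x /\<^sub>R norm x) = 1" using \<open>x \<noteq> 0\<close> by simp
    show "inner a (x /\<^sub>R norm x) = 0" "inner b (x /\<^sub>R norm x) = 0"
      using x[of a] x[of b] by (auto simp: orthogonal_def inner_commute span_base)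
  qed
qed

(* (c, x, y) \<mapsto> c Z + x X - y Y *)
definition pauli_vec :: "real \<times> real \<times> real \<Rightarrow> bool cmat" where
  "pauli_vec n = (case n of (c, x, y) \<Rightarrow> qubit_mat c (Complex x y) (Complex x (- y)) (- c))"

definition bloch :: "bool cmat \<Rightarrow> real \<times> real \<times> real" where
  "bloch A = (Re (A False False) - Re (A True True), 2 * Re (A False True), 2 * Im (A False True))"

lemma unitary_pauli_vec: "norm n = 1 \<Longrightarrow> unitary (pauli_vec n)"
  unfolding norm_eq_1 unitary_def pauli_vec_def mident_qubit_mat
  by (cases n) (auto simp: mmult_qubit_mat madj_qubit_mat complex_eq_iff algebra_simps power2_eq_square)

lemma mtrace_mmult_pauli_vec:
  assumes "hermitian A"
  shows "mtrace (mmult A (pauli_vec n)) = complex_of_real (inner (bloch A) n)"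
proof -
  have "Im (A a a) = 0" for a
    using arg_cong[OF hermitian_entry[OF assms, of a a], of Im] by simp
  moreover have "A True False = cnj (A False True)" by (rule hermitian_entry[OF assms, symmetric])
  ultimately show ?thesis
    unfolding mtrace_def mmult_def pauli_vec_def bloch_def qubit_mat_def
    by (cases n) (simp add: UNIV_bool complex_eq_iff algebra_simps)
qed

definition mvec :: "'a cmat \<Rightarrow> 'a \<times> 'a \<Rightarrow> complex" where
  "mvec X = (\<lambda>(a, b). X a b)"

lemma mtensor_pauli_vec:
  assumes "norm n = 1"
  shows "mtensor (pauli_vec n) (madj (mcnj (pauli_vec n)))
       = (\<lambda>p q. 2 * bell_proj p q + mvec (pauli_vec n) p * cnj (mvec (pauli_vec n) q) - mident p q)"
  using assms unfolding norm_eq_1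
  by (cases n) (auto simp: fun_eq_iff mtensor_def madj_def mcnj_def mvec_def pauli_vec_def qubit_mat_def
      bell_proj_eq mident_def complex_eq_iff algebra_simps power2_eq_square)

lemma mtrace_mmult_witness:
  "mtrace (mmult \<sigma> (\<lambda>p q. 2 * bell_proj p q + u p * cnj (u q) - mident p q))
   = 2 * qform \<sigma> psi + qform \<sigma> u - mtrace \<sigma>"
proof -
  have "mtrace (mmult \<sigma> (\<lambda>p q. 2 * A p q + B p q - C p q))
      = 2 * mtrace (mmult \<sigma> A) + mtrace (mmult \<sigma> B) - mtrace (mmult \<sigma> C)" for A B C
    unfolding mtrace_def mmult_def by (simp add: algebra_simps sum.distrib sum_subtractf sum_distrib_left)
  moreover have "mtrace (mmult \<sigma> bell_proj) = qform \<sigma> psi"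
    and "mtrace (mmult \<sigma> (\<lambda>p q. u p * cnj (u q))) = qform \<sigma> u"
    unfolding mtrace_def mmult_def qform_def bell_proj_def by (simp_all add: sum_distrib_left mult_ac)
  ultimately show ?thesis by simp
qed

lemma maxcorr_ge_fidelity:
  fixes \<sigma> :: "(bool \<times> bool) cmat"
  assumes "density \<sigma>"
  shows "2 * Re (qform \<sigma> psi) - 1 \<le> maxcorr \<sigma>"
proof -
  have "hermitian \<sigma>" "psd \<sigma>" "mtrace \<sigma> = 1" using assms unfolding density_def by auto
  have hermitian_marginals: "hermitian (ptrace_B \<sigma>)" "hermitian (mcnj (ptrace_A \<sigma>))"
    using \<open>hermitian \<sigma>\<close> by (simp_all add: hermitian_ptrace_B hermitian_ptrace_A hermitian_mcnj)
  obtain n where "norm n = 1"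
    and orthogonal: "inner (bloch (ptrace_B \<sigma>)) n = 0" "inner (bloch (mcnj (ptrace_A \<sigma>))) n = 0"
    using unit_vector_orthogonal_to_two[of "bloch (ptrace_B \<sigma>)" "bloch (mcnj (ptrace_A \<sigma>))"] by auto
  define X where "X = pauli_vec n"
  have "unitary X" "unitary (mcnj X)" using \<open>norm n = 1\<close> unfolding X_def
    by (simp_all add: unitary_pauli_vec unitary_mcnj)
  have "corr_feasible \<sigma> X (mcnj X)"
    unfolding corr_feasible_def
  proof (intro conjI)
    show "mtrace (mmult (ptrace_B \<sigma>) X) = 0" "mtrace (mmult (ptrace_A \<sigma>) (mcnj X)) = 0"
      unfolding X_def mtrace_mmult_mcnj mtrace_mmult_pauli_vec[OF hermitian_marginals(1)]
        mtrace_mmult_pauli_vec[OF hermitian_marginals(2)] using orthogonal by simp_all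
    show "mtrace (mmult (ptrace_B \<sigma>) (mmult X (madj X))) = 1"
      "mtrace (mmult (ptrace_A \<sigma>) (mmult (mcnj X) (madj (mcnj X)))) = 1"
      using \<open>unitary X\<close> \<open>unitary (mcnj X)\<close> \<open>mtrace \<sigma> = 1\<close> unfolding unitary_def
      by (simp_all add: mtrace_ptrace_B mtrace_ptrace_A)
  qed
  have "2 * Re (qform \<sigma> psi) - 1 \<le> Re (mtrace (mmult \<sigma> (mtensor X (madj (mcnj X)))))"
    using \<open>psd \<sigma>\<close> \<open>mtrace \<sigma> = 1\<close> unfolding X_def mtensor_pauli_vec[OF \<open>norm n = 1\<close>] mtrace_mmult_witness psd_def
    by simp
  also have "\<dots> \<le> corr_value \<sigma> X (mcnj X)" unfolding corr_value_def by (rule complex_Re_le_cmod)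
  also have "\<dots> \<le> maxcorr \<sigma>" by (rule maxcorr_upper[OF assms \<open>corr_feasible \<sigma> X (mcnj X)\<close>])
  finally show ?thesis .
qed

lemma lam_le_maxcorr:
  assumes "density \<sigma>" "1 - 3 * \<epsilon> / 4 \<le> Re (qform \<sigma> psi)"
  shows "lam \<epsilon> \<le> maxcorr \<sigma>"
  unfolding lam_def
  by (rule cInf_lower) (use assms in \<open>auto intro!: bdd_belowI[of _ 0] maxcorr_nonneg\<close>)

lemma lam_greatest:
  assumes "0 \<le> \<epsilon>" "\<epsilon> \<le> 1"
    and "\<And>\<sigma>. density \<sigma> \<Longrightarrow> 1 - 3 * \<epsilon> / 4 \<le> Re (qform \<sigma> psi) \<Longrightarrow> c \<le> maxcorr \<sigma>"
  shows "c \<le> lam \<epsilon>"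
  unfolding lam_def
proof (rule cInf_greatest)
  show "{maxcorr \<sigma> |\<sigma>. density \<sigma> \<and> 1 - 3 * \<epsilon> / 4 \<le> Re (qform \<sigma> psi)} \<noteq> {}"
    using density_rho_eps[OF assms(1,2)] qform_rho_eps_psi[of \<epsilon>] by auto
qed (use assms(3) in auto)

lemma lam_le_maxent_rho_eps:
  assumes "0 \<le> \<epsilon>" "\<epsilon> \<le> 1"
  shows "lam \<epsilon> \<le> maxent (rho_eps \<epsilon>)"
proof (rule maxent_greatest[OF density_rho_eps[OF assms]])
  fix n p \<tau>
  assume "decomposition (rho_eps \<epsilon>) n p \<tau>"
  with decomposition_qform_le_component[OF density_rho_eps[OF assms] this, of psi]
  show "\<exists>i<n. lam \<epsilon> \<le> maxcorr (\<tau> i)"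
    unfolding decomposition_def qform_rho_eps_psi by (auto intro!: lam_le_maxcorr)
qed

lemma lam_eq_0:
  assumes "0 \<le> \<epsilon>" "\<epsilon> \<le> 1" "2 / 3 \<le> \<epsilon>"
  shows "lam \<epsilon> = 0"
proof (rule antisym)
  have "Re (qform (basis_proj (False, False)) psi) = 1 / 2"
    unfolding qform_basis_proj cnj_psi psi_mult_psi by simp
  then show "lam \<epsilon> \<le> 0"
    using lam_le_maxcorr[OF density_basis_proj[of "(False, False)"], of \<epsilon>] assms(3)
    by (simp add: maxcorr_basis_proj)
  show "0 \<le> lam \<epsilon>" using assms(1,2) by (intro lam_greatest maxcorr_nonneg)
qed

lemma lam_lower_bound:
  assumes "0 \<le> \<epsilon>" "\<epsilon> \<le> 1"
  shows "1 - 3 * \<epsilon> / 2 \<le> lam \<epsilon>"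
proof (rule lam_greatest[OF assms])
  fix \<sigma> :: "(bool \<times> bool) cmat"
  assume "density \<sigma>" "1 - 3 * \<epsilon> / 4 \<le> Re (qform \<sigma> psi)"
  then show "1 - 3 * \<epsilon> / 2 \<le> maxcorr \<sigma>" using maxcorr_ge_fidelity[of \<sigma>] by linarith
qed

lemma lam_upper_bound:
  assumes "0 \<le> \<epsilon>" "\<epsilon> \<le> 1"
  shows "lam \<epsilon> \<le> 1 - \<epsilon>"
proof -
  have "lam \<epsilon> \<le> maxcorr (rho_eps \<epsilon>)"
    by (rule lam_le_maxcorr[OF density_rho_eps[OF assms]]) (simp add: qform_rho_eps_psi)
  also have "\<dots> \<le> 1 - \<epsilon>" by (rule maxcorr_rho_eps_le[OF assms])
  finally show ?thesis .
qed

theorem theorem8: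
  fixes \<epsilon> :: real
  assumes "0 \<le> \<epsilon>" and "\<epsilon> \<le> 1"
  shows "maxent (rho_eps \<epsilon>) = lam \<epsilon>
    \<and> (2 / 3 \<le> \<epsilon> \<longrightarrow> lam \<epsilon> = 0)
    \<and> (\<epsilon> < 2 / 3 \<longrightarrow> 1 - 3 * \<epsilon> / 2 \<le> lam \<epsilon> \<and> lam \<epsilon> \<le> 1 - \<epsilon>)"
proof (intro conjI impI)
  have "maxent (rho_eps \<epsilon>) \<le> lam \<epsilon>"
    using assms by (intro lam_greatest maxent_rho_eps_le)
  with lam_le_maxent_rho_eps[OF assms] show "maxent (rho_eps \<epsilon>) = lam \<epsilon>" by (rule antisym[rotated])
  show "lam \<epsilon> = 0" if "2 / 3 \<le> \<epsilon>" using assms that by (rule lam_eq_0)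
  show "1 - 3 * \<epsilon> / 2 \<le> lam \<epsilon>" using assms by (rule lam_lower_bound)
  show "lam \<epsilon> \<le> 1 - \<epsilon>" using assms by (rule lam_upper_bound)
qed

end
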